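(* Let $V$ be a simple unitary vertex operator algebra and let $a\in V$ be a primary vector of conformal dimension $d_a\neq 1$. Then there is a real number $A\geq 0$ such that $$\|a_m\|_n\leq A\sqrt{1+|m|}\,(1+|n|)\big(\|a_0\|_n+\|a_0\|_{n-m}\big)$$ for all $m,n\in\mathbb{Z}$. Moreover, if $\|a_0(L_0+1_V)^{-s}\|<+\infty$ for some real $s\geq 0$, then $a$ satisfies $(s+1)$-th order energy bounds and $$\|a_m(L_0+1_V)^{-s-1}\|\leq 2A(1+|m|)^{s+\frac12}\,\|a_0(L_0+1_V)^{-s}\|$$ for all $m\in\mathbb{Z}$.
   Context: A simple unitary vertex operator algebra is a vertex operator algebra $V$ (over $\mathbb{C}$) of CFT type, i.e. $V=\bigoplus_{n\geq 0}V_n$ with $V_n=\ker(L_0-n1_V)$ and $V_0=\mathbb{C}\Omega$, with vacuum $\Omega$ and conformal vector $\nu$, $Y(\nu,z)=\sum_{n}L_nz^{-n-2}$, equipped with a scalar product $(\cdot|\cdot)$ with $(\Omega|\Omega)=1$ and an antilinear involution $a\mapsto a^*$ with $\nu^*=\nu$ such that $(b|a_nc)=(a^*_{-n}b|c)$ for all $a,b,c\in V$, $n\in\mathbb{Z}$. For $a\in V$ the modes $a_n\in\mathrm{End}(V)$ are defined by $Y(z^{L_0}a,z)=\sum_{n\in\mathbb{Z}}a_nz^{-n}$. A vector $a$ is primary of conformal dimension $d$ if $a\in V_d$ and $L_ka=0$ for all integers $k>0$. Write $\|a\|=\sqrt{(a|a)}$, $V_{\leq n}=\bigoplus_{k\leq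 n}V_k$; for a linear map $R$ defined on $V$, $\|R\|_n:=\sup\{\|Rb\|: b\in V_{\leq n},\ \|b\|\leq 1\}$ and $\|R\|:=\sup\{\|Rb\|: b\in V,\|b\|\leq1\}$, both in $[0,+\infty]$; $(L_0+1_V)^{-s}$ acts on $V_n$ as multiplication by $(n+1)^{-s}$. A vector $a\in V$ satisfies $s$-th order energy bounds if there are real $C,t\geq 0$ with $\|a_m\|_n\leq C(1+|m|)^t(1+|n|)^s$ for all $m,n\in\mathbb{Z}$. *)

theory Defs
  imports "HOL-Analysis.Analysis" "HOL-Library.Extended_Real"
begin

text \<open>Data of a vertex operator algebra: a complex vector space with carrier type 'v and
scalar multiplication sc; Y a k b denotes the standard mode a_(k) b, i.e.
Y(a,z) = sum_k a_(k) z^(-k-1); Omega the vacuum; nu the conformal vector.\<close>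

definition Lop :: "('v \<Rightarrow> int \<Rightarrow> 'v \<Rightarrow> 'v) \<Rightarrow> 'v \<Rightarrow> int \<Rightarrow> 'v \<Rightarrow> 'v" where
  "Lop Y \<nu> n = Y \<nu> (n + 1)"

definition eigsp :: "(complex \<Rightarrow> 'v::ab_group_add \<Rightarrow> 'v) \<Rightarrow> ('v \<Rightarrow> int \<Rightarrow> 'v \<Rightarrow> 'v) \<Rightarrow> 'v \<Rightarrow> nat \<Rightarrow> 'v set" where
  "eigsp sc Y \<nu> n = {v. Lop Y \<nu> 0 v = sc (of_nat n) v}"

definition hcomp :: "(complex \<Rightarrow> 'v::ab_group_add \<Rightarrow> 'v) \<Rightarrow> ('v \<Rightarrow> int \<Rightarrow> 'v \<Rightarrow> 'v) \<Rightarrow> 'v \<Rightarrow> 'v \<Rightarrow> nat \<Rightarrow> 'v" where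
  "hcomp sc Y \<nu> v = (SOME f. finite {n. f n \<noteq> 0} \<and> (\<forall>n. f n \<in> eigsp sc Y \<nu> n)
       \<and> v = sum f {n. f n \<noteq> 0})"

text \<open>Modes a_n in the convention Y(z^(L_0) a, z) = sum_n a_n z^(-n): for a in V_d one has
a_n = a_(n+d-1); extended linearly in a.\<close>
definition pmode :: "(complex \<Rightarrow> 'v::ab_group_add \<Rightarrow> 'v) \<Rightarrow> ('v \<Rightarrow> int \<Rightarrow> 'v \<Rightarrow> 'v) \<Rightarrow> 'v \<Rightarrow> 'v \<Rightarrow> int \<Rightarrow> 'v \<Rightarrow> 'v" where
  "pmode sc Y \<nu> a n c =
     (\<Sum>d\<in>{d. hcomp sc Y \<nu> a d \<noteq> 0}. Y (hcomp sc Y \<nu> a d) (n + int d - 1) c)"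

definition sgn_pow :: "int \<Rightarrow> complex" where
  "sgn_pow r = (if even r then 1 else -1)"

definition is_VOA :: "(complex \<Rightarrow> 'v::ab_group_add \<Rightarrow> 'v) \<Rightarrow> ('v \<Rightarrow> int \<Rightarrow> 'v \<Rightarrow> 'v) \<Rightarrow> 'v \<Rightarrow> 'v \<Rightarrow> bool" where
  "is_VOA sc Y \<Omega> \<nu> \<longleftrightarrow>
     Vector_Spaces.vector_space sc \<and>
     (\<forall>a k. Vector_Spaces.linear sc sc (Y a k)) \<and>
     (\<forall>k b. Vector_Spaces.linear sc sc (\<lambda>a. Y a k b)) \<and>
     \<comment> \<open>truncation\<close>
     (\<forall>a b. \<exists>N. \<forall>k\<ge>N. Y a k b = 0) \<and>
     \<comment> \<open>vacuum\<close>
     (\<forall>k b. Y \<Omega> k b = (if k = -1 then b else 0)) \<and>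
     (\<forall>a. Y a (-1) \<Omega> = a \<and> (\<forall>k\<ge>0. Y a k \<Omega> = 0)) \<and>
     \<comment> \<open>Borcherds (Jacobi) identity; sums are finite by truncation\<close>
     (\<forall>a b c p q r. \<forall>\<^sub>F M in sequentially.
        (\<Sum>i<M. sc ((of_int p) gchoose i) (Y (Y a (r + int i) b) (p + q - int i) c)) =
        (\<Sum>i<M. sc ((-1)^i * ((of_int r) gchoose i))
            (Y a (p + r - int i) (Y b (q + int i) c)
             - sc (sgn_pow r) (Y b (q + r - int i) (Y a (p + int i) c))))) \<and>
     \<comment> \<open>conformal vector: Virasoro relations, L_(-1)-derivative property, nu in V_2\<close>
     (\<exists>cc::complex. \<forall>m n b.
        Lop Y \<nu> m (Lop Y \<nu> n b) - Lop Y \<nu> n (Lop Y \<nu> m b) =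
        sc (of_int (m - n)) (Lop Y \<nu> (m + n) b)
        + (if m + n = 0 then sc (cc / 12 * of_int (m^3 - m)) b else 0)) \<and>
     (\<forall>a k b. Y (Lop Y \<nu> (-1) a) k b = sc (- of_int k) (Y a (k - 1) b)) \<and>
     \<nu> \<in> eigsp sc Y \<nu> 2 \<and>
     \<comment> \<open>grading V = direct sum of V_n, n \<ge> 0, with finite-dimensional V_n\<close>
     (\<forall>v. \<exists>f::nat \<Rightarrow> 'v. finite {n. f n \<noteq> 0} \<and> (\<forall>n. f n \<in> eigsp sc Y \<nu> n)
            \<and> v = sum f {n. f n \<noteq> 0}) \<and>
     (\<forall>z::complex. \<forall>v. Lop Y \<nu> 0 v = sc z v \<and> v \<noteq> 0 \<longrightarrow> (\<exists>n::nat. z = of_nat n)) \<and>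
     (\<forall>n. \<exists>B. finite B \<and> eigsp sc Y \<nu> n \<subseteq> module.span sc B) \<and>
     \<comment> \<open>CFT type\<close>
     eigsp sc Y \<nu> 0 = range (\<lambda>z. sc z \<Omega>)"

definition vnorm :: "('v \<Rightarrow> 'v \<Rightarrow> complex) \<Rightarrow> 'v \<Rightarrow> real" where
  "vnorm sp v = sqrt (Re (sp v v))"

definition simple_unitary_VOA ::
  "(complex \<Rightarrow> 'v::ab_group_add \<Rightarrow> 'v) \<Rightarrow> ('v \<Rightarrow> int \<Rightarrow> 'v \<Rightarrow> 'v) \<Rightarrow> 'v \<Rightarrow> 'v
    \<Rightarrow> ('v \<Rightarrow> 'v \<Rightarrow> complex) \<Rightarrow> ('v \<Rightarrow> 'v) \<Rightarrow> bool" where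
  "simple_unitary_VOA sc Y \<Omega> \<nu> sp star \<longleftrightarrow>
     is_VOA sc Y \<Omega> \<nu> \<and>
     \<comment> \<open>simplicity\<close>
     (\<forall>I. module.subspace sc I \<and> (\<forall>a b k. b \<in> I \<longrightarrow> Y a k b \<in> I) \<longrightarrow> I = {0} \<or> I = UNIV) \<and>
     \<comment> \<open>scalar product\<close>
     (\<forall>x y z. sp x (y + z) = sp x y + sp x z) \<and>
     (\<forall>x y c. sp x (sc c y) = c * sp x y) \<and>
     (\<forall>x y. sp y x = cnj (sp x y)) \<and>
     (\<forall>x. x \<noteq> 0 \<longrightarrow> Re (sp x x) > 0) \<and>
     sp \<Omega> \<Omega> = 1 \<and>
     \<comment> \<open>antilinear involution\<close>
     (\<forall>x y. star (x + y) = star x + star y) \<and>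
     (\<forall>c x. star (sc c x) = sc (cnj c) (star x)) \<and>
     (\<forall>x. star (star x) = x) \<and>
     star \<nu> = \<nu> \<and>
     (\<forall>a b c n. sp b (pmode sc Y \<nu> a n c) = sp (pmode sc Y \<nu> (star a) (- n) b) c)"

definition primary :: "(complex \<Rightarrow> 'v::ab_group_add \<Rightarrow> 'v) \<Rightarrow> ('v \<Rightarrow> int \<Rightarrow> 'v \<Rightarrow> 'v) \<Rightarrow> 'v \<Rightarrow> 'v \<Rightarrow> nat \<Rightarrow> bool" where
  "primary sc Y \<nu> a d \<longleftrightarrow> a \<in> eigsp sc Y \<nu> d \<and> (\<forall>k>0. Lop Y \<nu> k a = 0)"

text \<open>V_{\<le> n} (for integer n; empty sum = {0} when n < 0)\<close>
definition Vle :: "(complex \<Rightarrow> 'v::ab_group_add \<Rightarrow> 'v) \<Rightarrow> ('v \<Rightarrow> int \<Rightarrow> 'v \<Rightarrow> 'v) \<Rightarrow> 'v \<Rightarrow> int \<Rightarrow> 'v set" where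
  "Vle sc Y \<nu> n = {v. \<forall>k. hcomp sc Y \<nu> v k \<noteq> 0 \<longrightarrow> int k \<le> n}"

definition opnorm_le :: "(complex \<Rightarrow> 'v::ab_group_add \<Rightarrow> 'v) \<Rightarrow> ('v \<Rightarrow> int \<Rightarrow> 'v \<Rightarrow> 'v) \<Rightarrow> 'v
    \<Rightarrow> ('v \<Rightarrow> 'v \<Rightarrow> complex) \<Rightarrow> ('v \<Rightarrow> 'v) \<Rightarrow> int \<Rightarrow> ereal" where
  "opnorm_le sc Y \<nu> sp R n =
     Sup {ereal (vnorm sp (R b)) | b. b \<in> Vle sc Y \<nu> n \<and> vnorm sp b \<le> 1}"

definition opnorm :: "('v \<Rightarrow> 'v \<Rightarrow> complex) \<Rightarrow> ('v \<Rightarrow> 'v) \<Rightarrow> ereal" where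
  "opnorm sp R = Sup {ereal (vnorm sp (R b)) | b. vnorm sp b \<le> 1}"

definition L0pow :: "(complex \<Rightarrow> 'v::ab_group_add \<Rightarrow> 'v) \<Rightarrow> ('v \<Rightarrow> int \<Rightarrow> 'v \<Rightarrow> 'v) \<Rightarrow> 'v \<Rightarrow> real \<Rightarrow> 'v \<Rightarrow> 'v" where
  "L0pow sc Y \<nu> s b =
     (\<Sum>k\<in>{k. hcomp sc Y \<nu> b k \<noteq> 0}. sc (of_real ((real k + 1) powr (- s))) (hcomp sc Y \<nu> b k))"

definition energy_bounds :: "(complex \<Rightarrow> 'v::ab_group_add \<Rightarrow> 'v) \<Rightarrow> ('v \<Rightarrow> int \<Rightarrow> 'v \<Rightarrow> 'v) \<Rightarrow> 'v
    \<Rightarrow> ('v \<Rightarrow> 'v \<Rightarrow> complex) \<Rightarrow> real \<Rightarrow> 'v \<Rightarrow> bool" where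
  "energy_bounds sc Y \<nu> sp s a \<longleftrightarrow>
     (\<exists>C t. C \<ge> 0 \<and> t \<ge> 0 \<and> (\<forall>m n::int.
        opnorm_le sc Y \<nu> sp (pmode sc Y \<nu> a m) n
          \<le> ereal (C * (1 + real_of_int \<bar>m\<bar>) powr t * (1 + real_of_int \<bar>n\<bar>) powr s)))"

end

theory Submission
  imports Defs
begin

text \<open>
  For a primary vector \<open>a\<close> of weight \<open>d\<close> the commutator formula gives
  \<open>[L\<^sub>m, a\<^sub>0] = (d - 1) m a\<^sub>m\<close>, so for \<open>d \<noteq> 1\<close> and \<open>m \<noteq> 0\<close> every mode \<open>a\<^sub>m\<close> is expressed
  through \<open>a\<^sub>0\<close> and \<open>L\<^sub>m\<close>. Unitarity turns the Virasoro relations with central charge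
  \<open>\<kappa>\<close> into \<open>\<parallel>L\<^sub>-\<^sub>m c\<parallel>\<^sup>2 = \<parallel>L\<^sub>m c\<parallel>\<^sup>2 + (2 m k + \<kappa>/12 (m\<^sup>3 - m)) \<parallel>c\<parallel>\<^sup>2\<close> for \<open>c\<close> of degree \<open>k\<close>,
  and an induction on the degree yields \<open>\<parallel>L\<^sub>m b\<parallel> \<le> const (1 + \<bar>m\<bar>)\<^bsup>3/2\<^esup> (1 + \<bar>n\<bar>) \<parallel>b\<parallel>\<close>
  on \<open>V\<^sub>\<le>\<^sub>n\<close>. Since \<open>L\<^sub>m\<close> maps \<open>V\<^sub>\<le>\<^sub>n\<close> into \<open>V\<^sub>\<le>\<^sub>n\<^sub>-\<^sub>m\<close>, the first estimate follows, the
  factor \<open>1 + \<bar>m\<bar>\<close> being absorbed by \<open>\<bar>(d - 1) m\<bar>\<close>.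
  For the second, a bound on \<open>a\<^sub>0 (L\<^sub>0 + 1)\<^bsup>-s\<^esup>\<close> bounds \<open>a\<^sub>0\<close> on \<open>V\<^sub>\<le>\<^sub>j\<close> by \<open>(1 + \<bar>j\<bar>)\<^bsup>s\<^esup>\<close>;
  inserting this into the first estimate bounds \<open>a\<^sub>m\<close> on each \<open>V\<^sub>k\<close> by
  \<open>(1 + \<bar>m\<bar>)\<^bsup>s+1/2\<^esup> (1 + k)\<^bsup>s+1\<^esup>\<close>, and since the modes map the mutually orthogonal
  spaces \<open>V\<^sub>k\<close> to mutually orthogonal spaces these bounds add up in square norm.
\<close>

lemma (in vector_space) eigenvectors_sum_eq_0:
  assumes T: "module_hom scale scale T" and S: "finite S" and \<mu>: "inj_on \<mu> S"
    and eig: "\<And>n. n \<in> S \<Longrightarrow> T (f n) = scale (\<mu> n) (f n)" and sum: "sum f S = 0"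
  shows "\<forall>n\<in>S. f n = 0"
  using S \<mu> eig sum
proof (induction S arbitrary: f rule: finite_induct)
  case empty
  then show ?case by simp
next
  case (insert a S f)
  \<comment> \<open>applying \<open>T - \<mu> a\<close> kills \<open>f a\<close> and rescales the other summands by nonzero factors\<close>
  define g where "g n = scale (\<mu> n - \<mu> a) (f n)" for n
  have fa: "f a = - sum f S"
    using insert.prems(3) insert.hyps by (simp add: eq_neg_iff_add_eq_0)
  have "(\<Sum>n\<in>S. scale (\<mu> n) (f n)) = - T (f a)"
    unfolding fa module_hom.neg[OF T] module_hom.sum[OF T] using insert.prems(2) by simp
  also have "\<dots> = - scale (\<mu> a) (f a)"
    using insert.prems(2) by simp
  also have "\<dots> = (\<Sum>n\<in>S. scale (\<mu> a) (f n))"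
    by (simp add: fa scale_sum_right)
  finally have "(\<Sum>n\<in>S. scale (\<mu> n) (f n)) = (\<Sum>n\<in>S. scale (\<mu> a) (f n))" .
  then have "sum g S = 0"
    by (simp add: g_def scale_left_diff_distrib sum_subtractf)
  moreover have "T (g n) = scale (\<mu> n) (g n)" if "n \<in> S" for n
    using insert.prems(2) that by (simp add: g_def module_hom.scale[OF T] scale_left_commute)
  ultimately have "\<forall>n\<in>S. g n = 0"
    using insert.IH[of g] insert.prems(1) by (simp add: inj_on_insert)
  moreover have "\<mu> n \<noteq> \<mu> a" if "n \<in> S" for n
    using insert.prems(1) insert.hyps(2) that by (auto simp: inj_on_def)
  ultimately have "\<forall>n\<in>S. f n = 0" by (simp add: g_def)
  then show ?case by (simp add: fa)
qed

lemma monomial_le_one_plus_powers: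
  fixes p q :: real
  assumes "0 \<le> p" "0 \<le> q" "i \<le> a" "j \<le> b"
  shows "p ^ i * q ^ j \<le> (1 + p) ^ a * (1 + q) ^ b"
proof -
  have "p ^ i \<le> (1 + p) ^ i" "q ^ j \<le> (1 + q) ^ j"
    using assms by (simp_all add: power_mono)
  moreover have "(1 + p) ^ i \<le> (1 + p) ^ a" "(1 + q) ^ j \<le> (1 + q) ^ b"
    using assms by (simp_all add: power_increasing)
  ultimately show ?thesis
    using assms by (intro mult_mono) auto
qed

lemma cubic_polynomial_le:
  fixes p q K :: real
  assumes p: "0 \<le> p" and q: "0 \<le> q" and K: "0 \<le> K"
  shows "2 * q ^ 2 + K * p ^ 2 * q + 2 * p * q + K * p ^ 3 \<le> (4 + 2 * K) * ((1 + p) ^ 3 * (1 + q)\<^sup>2)"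
proof -
  define M where "M = (1 + p) ^ 3 * (1 + q)\<^sup>2"
  have "p ^ 0 * q ^ 2 \<le> M" "p ^ 2 * q ^ 1 \<le> M" "p ^ 1 * q ^ 1 \<le> M" "p ^ 3 * q ^ 0 \<le> M"
    unfolding M_def by (rule monomial_le_one_plus_powers[OF p q]; simp)+
  then have t: "q ^ 2 \<le> M" "p ^ 2 * q \<le> M" "p * q \<le> M" "p ^ 3 \<le> M"
    by simp_all
  moreover have "K * (p ^ 2 * q) \<le> K * M" "K * p ^ 3 \<le> K * M"
    using t K by (simp_all add: mult_left_mono)
  ultimately have "2 * q ^ 2 + K * p ^ 2 * q + 2 * p * q + K * p ^ 3 \<le> 4 * M + 2 * (K * M)"
    by (simp add: mult.assoc)
  then show ?thesis
    by (simp add: M_def algebra_simps)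
qed

locale unitary_voa =
  fixes sc :: "complex \<Rightarrow> 'v::ab_group_add \<Rightarrow> 'v"
    and Y :: "'v \<Rightarrow> int \<Rightarrow> 'v \<Rightarrow> 'v"
    and \<Omega> \<nu> :: 'v and sp :: "'v \<Rightarrow> 'v \<Rightarrow> complex" and star :: "'v \<Rightarrow> 'v"
  assumes simple_unitary: "simple_unitary_VOA sc Y \<Omega> \<nu> sp star"
begin

lemma VOA: "is_VOA sc Y \<Omega> \<nu>"
  using simple_unitary by (simp add: simple_unitary_VOA_def)

sublocale vs: vector_space sc
  using VOA unfolding is_VOA_def by (elim conjE)

lemma mode_hom[rule_format]: "\<forall>a k. module_hom sc sc (Y a k)"
  using VOA unfolding is_VOA_def module_hom_iff_linear by (elim conjE)

lemma mode_hom_left[rule_format]: "\<forall>k b. module_hom sc sc (\<lambda>a. Y a k b)"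
  using VOA unfolding is_VOA_def module_hom_iff_linear by (elim conjE)

lemma borcherds[rule_format]:
  "\<forall>a b c p q r. \<forall>\<^sub>F M in sequentially.
     (\<Sum>i<M. sc ((of_int p) gchoose i) (Y (Y a (r + int i) b) (p + q - int i) c)) =
     (\<Sum>i<M. sc ((-1)^i * ((of_int r) gchoose i))
         (Y a (p + r - int i) (Y b (q + int i) c)
          - sc (sgn_pow r) (Y b (q + r - int i) (Y a (p + int i) c))))"
  using VOA unfolding is_VOA_def by (elim conjE)

lemma virasoro_ex:
  "\<exists>cc::complex. \<forall>m n b.
     Lop Y \<nu> m (Lop Y \<nu> n b) - Lop Y \<nu> n (Lop Y \<nu> m b) =
     sc (of_int (m - n)) (Lop Y \<nu> (m + n) b)
     + (if m + n = 0 then sc (cc / 12 * of_int (m^3 - m)) b else 0)"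
  using VOA unfolding is_VOA_def by (elim conjE)

lemma L_minus_one_derivative[rule_format]:
  "\<forall>a k b. Y (Lop Y \<nu> (-1) a) k b = sc (- of_int k) (Y a (k - 1) b)"
  using VOA unfolding is_VOA_def by (elim conjE)

lemma conformal_vector_weight: "\<nu> \<in> eigsp sc Y \<nu> 2"
  using VOA unfolding is_VOA_def by (elim conjE)

lemma graded[rule_format]:
  "\<forall>v. \<exists>f::nat \<Rightarrow> 'v. finite {n. f n \<noteq> 0} \<and> (\<forall>n. f n \<in> eigsp sc Y \<nu> n) \<and> v = sum f {n. f n \<noteq> 0}"
  using VOA unfolding is_VOA_def by (elim conjE)

lemma L0_eigenvalue_nat[rule_format]:
  "\<forall>z::complex. \<forall>v. Lop Y \<nu> 0 v = sc z v \<and> v \<noteq> 0 \<longrightarrow> (\<exists>n::nat. z = of_nat n)"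
  using VOA unfolding is_VOA_def by (elim conjE)

lemma sp_add_right[rule_format]: "\<forall>x y z. sp x (y + z) = sp x y + sp x z"
  using simple_unitary unfolding simple_unitary_VOA_def by (elim conjE)

lemma sp_scale_right[rule_format]: "\<forall>x y c. sp x (sc c y) = c * sp x y"
  using simple_unitary unfolding simple_unitary_VOA_def by (elim conjE)

lemma sp_cnj[rule_format]: "\<forall>x y. sp y x = cnj (sp x y)"
  using simple_unitary unfolding simple_unitary_VOA_def by (elim conjE)

lemma sp_self_pos[rule_format]: "\<forall>x. x \<noteq> 0 \<longrightarrow> Re (sp x x) > 0"
  using simple_unitary unfolding simple_unitary_VOA_def by (elim conjE)

lemma star_conformal_vector: "star \<nu> = \<nu>"
  using simple_unitary unfolding simple_unitary_VOA_def by (elim conjE)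

lemma pmode_adjoint[rule_format]:
  "\<forall>a b c n. sp b (pmode sc Y \<nu> a n c) = sp (pmode sc Y \<nu> (star a) (- n) b) c"
  using simple_unitary unfolding simple_unitary_VOA_def by (elim conjE)

section \<open>The grading by \<open>L\<^sub>0\<close>\<close>

abbreviation L :: "int \<Rightarrow> 'v \<Rightarrow> 'v" where "L n \<equiv> Lop Y \<nu> n"
abbreviation hc :: "'v \<Rightarrow> nat \<Rightarrow> 'v" where "hc \<equiv> hcomp sc Y \<nu>"

lemma L_hom: "module_hom sc sc (L n)"
  unfolding Lop_def by (rule mode_hom)

definition Vdeg :: "int \<Rightarrow> 'v set" where
  "Vdeg j = {v. L 0 v = sc (of_int j) v}"

lemma eigsp_Vdeg: "eigsp sc Y \<nu> n = Vdeg (int n)"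
  by (simp add: eigsp_def Vdeg_def)

lemma subspace_Vdeg: "vs.subspace (Vdeg j)"
  unfolding vs.subspace_def Vdeg_def
  by (simp add: module_hom.zero[OF L_hom] module_hom.add[OF L_hom] module_hom.scale[OF L_hom]
      vs.scale_right_distrib vs.scale_left_commute)

lemma Vdeg_negative:
  assumes v: "v \<in> Vdeg j" and j: "j < 0"
  shows "v = 0"
proof (rule ccontr)
  assume "v \<noteq> 0"
  then obtain n :: nat where "(of_int j :: complex) = of_nat n"
    using L0_eigenvalue_nat[of v "of_int j"] v by (auto simp: Vdeg_def)
  then have "j = int n" by (metis of_int_eq_iff of_int_of_nat_eq)
  with j show False by simp
qed

lemma hcomp_spec:
  "finite {n. hc v n \<noteq> 0} \<and> (\<forall>n. hc v n \<in> Vdeg (int n)) \<and> v = sum (hc v) {n. hc v n \<noteq> 0}"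
  unfolding hcomp_def eigsp_Vdeg[symmetric] using graded[of v] by (rule someI_ex)

lemma hcomp_finite: "finite {n. hc v n \<noteq> 0}"
  using hcomp_spec by blast

lemma hcomp_Vdeg: "hc v n \<in> Vdeg (int n)"
  using hcomp_spec by blast

lemma hcomp_sum_superset:
  assumes "finite S" "{n. hc v n \<noteq> 0} \<subseteq> S"
  shows "sum (hc v) S = v"
proof -
  have "sum (hc v) S = sum (hc v) {n. hc v n \<noteq> 0}"
    using assms by (intro sum.mono_neutral_right) auto
  then show ?thesis using hcomp_spec by simp
qed

lemma hcomp_unique:
  assumes S: "finite S" and f: "\<And>n. n \<in> S \<Longrightarrow> f n \<in> Vdeg (int n)"
  shows "hc (sum f S) = (\<lambda>n. if n \<in> S then f n else 0)"
proof -
  define v where "v = sum f S"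
  define T where "T = S \<union> {n. hc v n \<noteq> 0}"
  define g where "g n = (if n \<in> S then f n else 0) - hc v n" for n
  have T: "finite T" using S hcomp_finite by (simp add: T_def)
  have "sum (\<lambda>n. if n \<in> S then f n else 0) T = sum f S"
    using S T by (subst sum.mono_neutral_right[of T S]) (auto simp: T_def)
  moreover have "sum (hc v) T = v"
    using T by (rule hcomp_sum_superset) (auto simp: T_def)
  ultimately have sum_g: "sum g T = 0"
    by (simp add: g_def sum_subtractf v_def)
  have "g n \<in> Vdeg (int n)" for n
    unfolding g_def
    by (intro vs.subspace_diff[OF subspace_Vdeg] hcomp_Vdeg)
      (simp add: f vs.subspace_0[OF subspace_Vdeg])
  then have "L 0 (g n) = sc (of_nat n) (g n)" for n
    by (simp add: Vdeg_def)
  then have g0: "\<forall>n\<in>T. g n = 0"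
    by (intro vs.eigenvectors_sum_eq_0[OF L_hom T _ _ sum_g]) (auto simp: inj_on_def)
  show ?thesis
  proof
    fix n
    show "hc (sum f S) n = (if n \<in> S then f n else 0)"
      using g0 by (cases "n \<in> T") (auto simp: g_def T_def v_def)
  qed
qed

lemma hcomp_homogeneous: "v \<in> Vdeg (int n) \<Longrightarrow> hc v = (\<lambda>k. if k = n then v else 0)"
  using hcomp_unique[of "{n}" "\<lambda>_. v"] by auto

lemma hcomp_zero: "hc 0 = (\<lambda>k. 0)"
  using hcomp_unique[of "{}"] by auto

lemma hcomp_add: "hc (x + y) = (\<lambda>n. hc x n + hc y n)"
proof -
  let ?T = "{n. hc x n \<noteq> 0} \<union> {n. hc y n \<noteq> 0}"
  have T: "finite ?T" using hcomp_finite by blast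
  have "x + y = sum (\<lambda>n. hc x n + hc y n) ?T"
    using hcomp_sum_superset[OF T, of x] hcomp_sum_superset[OF T, of y] by (simp add: sum.distrib)
  moreover have "hc (sum (\<lambda>n. hc x n + hc y n) ?T) = (\<lambda>n. if n \<in> ?T then hc x n + hc y n else 0)"
    by (rule hcomp_unique[OF T]) (simp add: vs.subspace_add[OF subspace_Vdeg] hcomp_Vdeg)
  ultimately show ?thesis by auto
qed

lemma hcomp_scale: "hc (sc c x) = (\<lambda>n. sc c (hc x n))"
proof -
  let ?T = "{n. hc x n \<noteq> 0}"
  have "sc c x = sum (\<lambda>n. sc c (hc x n)) ?T"
    using hcomp_spec[of x] by (metis vs.scale_sum_right)
  moreover have "hc (sum (\<lambda>n. sc c (hc x n)) ?T) = (\<lambda>n. if n \<in> ?T then sc c (hc x n) else 0)"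
    by (rule hcomp_unique[OF hcomp_finite]) (simp add: vs.subspace_scale[OF subspace_Vdeg] hcomp_Vdeg)
  ultimately show ?thesis by auto
qed

lemma hcomp_sum: "hc (sum f I) k = (\<Sum>i\<in>I. hc (f i) k)"
  by (induct I rule: infinite_finite_induct) (auto simp: hcomp_zero hcomp_add)

lemma pmode_homogeneous: "a \<in> Vdeg (int d) \<Longrightarrow> pmode sc Y \<nu> a n = Y a (n + int d - 1)"
  by (cases "a = 0")
    (auto simp: pmode_def hcomp_zero module_hom.zero[OF mode_hom_left] hcomp_homogeneous)

lemma pmode_conformal_vector: "pmode sc Y \<nu> \<nu> n = L n"
  using pmode_homogeneous[of \<nu> 2] conformal_vector_weight by (simp add: eigsp_Vdeg Lop_def add.commute)

lemma L_adjoint: "sp b (L n c) = sp (L (- n) b) c"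
  using pmode_adjoint[of b \<nu> n c] by (simp add: star_conformal_vector pmode_conformal_vector)

lemma sp_add_left: "sp (x + y) z = sp x z + sp y z"
  by (metis sp_add_right sp_cnj complex_cnj_add)

lemma sp_scale_left: "sp (sc c x) y = cnj c * sp x y"
  by (metis sp_scale_right sp_cnj complex_cnj_mult complex_cnj_cnj)

lemma sp_zero_right[simp]: "sp x 0 = 0"
  using sp_add_right[of x 0 0] by simp

lemma sp_zero_left[simp]: "sp 0 x = 0"
  using sp_add_left[of 0 0 x] by simp

lemma sp_sum_right: "sp x (sum f S) = (\<Sum>i\<in>S. sp x (f i))"
  by (induct S rule: infinite_finite_induct) (auto simp: sp_add_right)

definition sqnorm :: "'v \<Rightarrow> real" where
  "sqnorm x = Re (sp x x)"

lemma sp_self_real: "sp x x = of_real (sqnorm x)"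
proof -
  have "Im (sp x x) = 0"
    using sp_cnj[of x x] by (metis cnj.sel(2) neg_equal_zero)
  then show ?thesis by (simp add: sqnorm_def complex_eq_iff)
qed

lemma sqnorm_nonneg: "sqnorm x \<ge> 0"
  using sp_self_pos[of x] by (cases "x = 0") (auto simp: sqnorm_def less_imp_le)

lemma sqnorm_eq_0_iff: "sqnorm x = 0 \<longleftrightarrow> x = 0"
  using sp_self_pos[of x] by (cases "x = 0") (auto simp: sqnorm_def)

lemma sqnorm_zero[simp]: "sqnorm 0 = 0"
  by (simp add: sqnorm_eq_0_iff)

lemma vnorm_sqnorm: "vnorm sp x = sqrt (sqnorm x)"
  by (simp add: vnorm_def sqnorm_def)

lemma vnorm_nonneg: "vnorm sp x \<ge> 0"
  by (simp add: vnorm_sqnorm sqnorm_nonneg)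

lemma vnorm_power2: "(vnorm sp x)\<^sup>2 = sqnorm x"
  by (simp add: vnorm_sqnorm sqnorm_nonneg)

lemma vnorm_eq_0_iff: "vnorm sp x = 0 \<longleftrightarrow> x = 0"
  by (simp add: vnorm_sqnorm sqnorm_eq_0_iff)

lemma vnorm_zero[simp]: "vnorm sp 0 = 0"
  by (simp add: vnorm_eq_0_iff)

lemma vnorm_pos: "x \<noteq> 0 \<Longrightarrow> vnorm sp x > 0"
  using vnorm_nonneg vnorm_eq_0_iff by (simp add: less_le)

lemma sqnorm_add: "sqnorm (x + y) = sqnorm x + 2 * Re (sp x y) + sqnorm y"
proof -
  have "sp (x + y) (x + y) = sp x x + sp x y + (sp y x + sp y y)"
    by (simp add: sp_add_left sp_add_right)
  moreover have "Re (sp y x) = Re (sp x y)"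
    using sp_cnj by (metis cnj.sel(1))
  ultimately show ?thesis
    by (simp add: sqnorm_def)
qed

lemma sqnorm_scale: "sqnorm (sc c x) = (cmod c)\<^sup>2 * sqnorm x"
proof -
  have "sp (sc c x) (sc c x) = (cnj c * c) * sp x x"
    by (simp add: sp_scale_left sp_scale_right)
  also have "cnj c * c = of_real ((cmod c)\<^sup>2)"
    by (metis complex_norm_square mult.commute)
  finally have "sp (sc c x) (sc c x) = of_real ((cmod c)\<^sup>2 * sqnorm x)"
    by (simp add: sp_self_real)
  then show ?thesis
    by (simp add: sqnorm_def)
qed

lemma vnorm_scale: "vnorm sp (sc c x) = cmod c * vnorm sp x"
  by (simp add: vnorm_sqnorm sqnorm_scale real_sqrt_mult)

lemma Re_sp_le: "Re (sp x y) \<le> vnorm sp x * vnorm sp y"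
proof (cases "x = 0 \<or> y = 0")
  case True
  then show ?thesis by auto
next
  case False
  define nx ny where "nx = vnorm sp x" and "ny = vnorm sp y"
  have px: "nx > 0" and py: "ny > 0"
    using False vnorm_pos by (auto simp: nx_def ny_def)
  define t where "t = nx / ny"
  have "0 \<le> sqnorm (x + sc (of_real (- t)) y)"
    by (rule sqnorm_nonneg)
  also have "\<dots> = nx\<^sup>2 - 2 * t * Re (sp x y) + t\<^sup>2 * ny\<^sup>2"
    by (simp only: sqnorm_add sqnorm_scale sp_scale_right) (simp add: vnorm_power2 nx_def ny_def)
  also have "t\<^sup>2 * ny\<^sup>2 = nx\<^sup>2"
    using py by (simp add: t_def power_divide)
  finally have "2 * t * Re (sp x y) \<le> 2 * nx\<^sup>2"
    by simp
  then have "t * Re (sp x y) \<le> t * (nx * ny)"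
    using py by (simp add: t_def power2_eq_square)
  moreover have "t > 0"
    using px py by (simp add: t_def)
  ultimately show ?thesis
    by (simp add: nx_def ny_def)
qed

lemma vnorm_triangle: "vnorm sp (x + y) \<le> vnorm sp x + vnorm sp y"
proof -
  have "(vnorm sp (x + y))\<^sup>2 \<le> (vnorm sp x + vnorm sp y)\<^sup>2"
    using Re_sp_le[of x y] by (simp add: vnorm_power2 sqnorm_add power2_sum)
  then show ?thesis
    using vnorm_nonneg by (meson add_nonneg_nonneg power2_le_imp_le)
qed

lemma vnorm_diff_le: "vnorm sp (x - y) \<le> vnorm sp x + vnorm sp y"
  using vnorm_triangle[of x "- y"] vnorm_scale[of "-1" y] by simp

lemma sqnorm_sum_orthogonal:
  assumes "finite S" "\<And>i j. i \<in> S \<Longrightarrow> j \<in> S \<Longrightarrow> i \<noteq> j \<Longrightarrow> sp (f i) (f j) = 0"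
  shows "sqnorm (sum f S) = (\<Sum>i\<in>S. sqnorm (f i))"
  using assms
proof (induct S rule: finite_induct)
  case empty
  then show ?case by (simp add: sqnorm_def)
next
  case (insert a S)
  have "sp (f a) (sum f S) = 0"
    using insert by (auto simp: sp_sum_right intro!: sum.neutral)
  then show ?case
    using insert by (simp add: sqnorm_add)
qed

lemma Vdeg_orthogonal:
  assumes "x \<in> Vdeg i" "y \<in> Vdeg j" "i \<noteq> j"
  shows "sp x y = 0"
proof -
  have "of_int j * sp x y = sp x (L 0 y)"
    using assms by (simp add: Vdeg_def sp_scale_right)
  also have "\<dots> = sp (L 0 x) y"
    using L_adjoint[of x 0 y] by simp
  also have "\<dots> = of_int i * sp x y"
    using assms by (simp add: Vdeg_def sp_scale_left)
  finally have "(of_int j - of_int i) * sp x y = 0"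
    by (simp add: left_diff_distrib)
  moreover have "(of_int j - of_int i :: complex) \<noteq> 0"
    using assms(3) by simp
  ultimately show ?thesis by simp
qed

lemma sqnorm_sum_Vdeg:
  assumes "finite I" "\<And>i. i \<in> I \<Longrightarrow> f i \<in> Vdeg (w i)" "inj_on w I"
  shows "sqnorm (sum f I) = (\<Sum>i\<in>I. sqnorm (f i))"
proof (rule sqnorm_sum_orthogonal[OF assms(1)])
  fix i j
  assume "i \<in> I" "j \<in> I" "i \<noteq> j"
  then show "sp (f i) (f j) = 0"
    using assms Vdeg_orthogonal by (meson inj_on_contraD)
qed

lemma sqnorm_hcomp: "sqnorm b = (\<Sum>k\<in>{k. hc b k \<noteq> 0}. sqnorm (hc b k))"
proof -
  have "sqnorm b = sqnorm (sum (hc b) {k. hc b k \<noteq> 0})"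
    using hcomp_sum_superset[OF hcomp_finite[of b]] by simp
  also have "\<dots> = (\<Sum>k\<in>{k. hc b k \<noteq> 0}. sqnorm (hc b k))"
    by (rule sqnorm_sum_Vdeg[where w=int]) (auto simp: hcomp_finite hcomp_Vdeg)
  finally show ?thesis .
qed

section \<open>Norm estimates for the Virasoro modes\<close>

definition central_charge :: complex where
  "central_charge = (SOME cc. \<forall>m n b.
     L m (L n b) - L n (L m b) = sc (of_int (m - n)) (L (m + n) b)
       + (if m + n = 0 then sc (cc / 12 * of_int (m^3 - m)) b else 0))"

lemma virasoro:
  "L m (L n b) - L n (L m b) = sc (of_int (m - n)) (L (m + n) b)
     + (if m + n = 0 then sc (central_charge / 12 * of_int (m^3 - m)) b else 0)"
proof -
  have "\<forall>m n b. L m (L n b) - L n (L m b) = sc (of_int (m - n)) (L (m + n) b)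
     + (if m + n = 0 then sc (central_charge / 12 * of_int (m^3 - m)) b else 0)"
    unfolding central_charge_def by (rule someI_ex) (rule virasoro_ex)
  then show ?thesis by blast
qed

lemma L_Vdeg: "c \<in> Vdeg k \<Longrightarrow> L m c \<in> Vdeg (k - m)"
proof -
  assume c: "c \<in> Vdeg k"
  have "L 0 (L m c) - L m (L 0 c) = sc (- of_int m) (L m c)"
    using virasoro[of 0 m c] by (cases "m = 0") auto
  then have "L 0 (L m c) = L m (L 0 c) + sc (- of_int m) (L m c)"
    by (metis diff_eq_eq add.commute)
  also have "L m (L 0 c) = sc (of_int k) (L m c)"
    using c by (simp add: Vdeg_def module_hom.scale[OF L_hom])
  finally show "L m c \<in> Vdeg (k - m)"
    by (simp add: Vdeg_def vs.scale_left_diff_distrib)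
qed

lemma sqnorm_L_uminus:
  assumes "c \<in> Vdeg k"
  shows "sqnorm (L (- m) c) = sqnorm (L m c)
    + (2 * real_of_int m * real_of_int k + Re central_charge / 12 * real_of_int (m^3 - m)) * sqnorm c"
proof -
  \<comment> \<open>\<open>\<parallel>L\<^sub>-\<^sub>m c\<parallel>\<^sup>2 = (c | L\<^sub>m L\<^sub>-\<^sub>m c)\<close>, then commute \<open>L\<^sub>m\<close> past \<open>L\<^sub>-\<^sub>m\<close>\<close>
  have "L m (L (-m) c) = L (-m) (L m c) + sc (of_int (2*m) * of_int k) c
      + sc (central_charge / 12 * of_int (m^3 - m)) c"
    using virasoro[of m "- m" c] assms by (simp add: Vdeg_def diff_eq_eq add_ac)
  then have sp_eq: "sp (L (-m) c) (L (-m) c) = sp (L m c) (L m c) + (of_int (2*m) * of_int k) * sp c c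
      + (central_charge / 12 * of_int (m^3 - m)) * sp c c"
    using L_adjoint[of c m "L (-m) c"] L_adjoint[of c "-m" "L m c"]
    by (simp add: sp_add_right sp_scale_right)
  have "sqnorm (L (- m) c) = Re (sp (L (-m) c) (L (-m) c))"
    by (simp add: sqnorm_def)
  also have "\<dots> = sqnorm (L m c) + Re ((of_int (2*m) * of_int k) * of_real (sqnorm c))
      + Re ((central_charge / 12 * of_int (m^3 - m)) * of_real (sqnorm c))"
    unfolding sp_eq by (simp add: sp_self_real)
  finally show ?thesis
    by (simp add: algebra_simps)
qed

definition charge_bound :: real where
  "charge_bound = \<bar>Re central_charge\<bar> / 12"

lemma charge_bound_nonneg: "charge_bound \<ge> 0"
  by (simp add: charge_bound_def)

lemma sqnorm_L_uminus_le:
  fixes n k :: nat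
  assumes "c \<in> Vdeg k"
  shows "sqnorm (L (- n) c) \<le> sqnorm (L n c) + (2 * n * k + charge_bound * n ^ 3) * sqnorm c"
proof -
  have "Re central_charge / 12 * (real n ^ 3 - real n) \<le> charge_bound * real n ^ 3"
  proof (cases "n = 0")
    case False
    then have "real n * 1 \<le> real n * real n ^ 2"
      by (intro mult_left_mono) auto
    then have "real n \<le> real n ^ 3"
      by (simp add: power3_eq_cube power2_eq_square)
    then have "Re central_charge / 12 * (real n ^ 3 - real n) \<le> charge_bound * (real n ^ 3 - real n)"
      by (intro mult_right_mono) (auto simp: charge_bound_def)
    also have "\<dots> \<le> charge_bound * real n ^ 3"
      using charge_bound_nonneg by (simp add: mult_left_mono)
    finally show ?thesis .
  qed simp
  then have "(Re central_charge / 12 * real_of_int (int n^3 - int n)) * sqnorm c \<le> (charge_bound * n ^ 3) * sqnorm c"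
    by (intro mult_right_mono) (simp_all add: sqnorm_nonneg)
  then show ?thesis
    using sqnorm_L_uminus[OF assms, of n] by (simp add: algebra_simps)
qed

lemma sqnorm_le_from_product_bound:
  assumes "sqnorm x \<le> vnorm sp c * vnorm sp y" "sqnorm y \<le> G * sqnorm x" "G \<ge> 0"
  shows "sqnorm x \<le> G * sqnorm c"
proof (cases "x = 0")
  case True
  then show ?thesis using assms(3) sqnorm_nonneg[of c] by simp
next
  case False
  have "vnorm sp x * vnorm sp x \<le> vnorm sp c * vnorm sp y"
    using assms(1) by (simp add: vnorm_power2[symmetric] power2_eq_square)
  also have "\<dots> \<le> vnorm sp c * (sqrt G * vnorm sp x)"
    using assms(2) vnorm_nonneg[of c]
    by (intro mult_left_mono) (simp_all add: vnorm_sqnorm real_sqrt_mult[symmetric])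
  finally have "vnorm sp x * vnorm sp x \<le> (sqrt G * vnorm sp c) * vnorm sp x"
    by (simp add: ac_simps)
  then have "vnorm sp x \<le> sqrt G * vnorm sp c"
    using vnorm_pos[OF False] by simp
  then have "(vnorm sp x)\<^sup>2 \<le> (sqrt G * vnorm sp c)\<^sup>2"
    using vnorm_nonneg by (simp add: power_mono)
  then show ?thesis
    using assms(3) by (simp add: vnorm_power2 power_mult_distrib)
qed

lemma sqnorm_L_positive_le:
  fixes n k :: nat
  assumes "c \<in> Vdeg k" "0 < n"
  shows "sqnorm (L n c) \<le> (2 * k\<^sup>2 + charge_bound * n\<^sup>2 * k) * sqnorm c"
  using assms
proof (induction k arbitrary: c rule: less_induct)
  case (less k c)
  define x where "x = L n c"
  have x: "x \<in> Vdeg (int k - int n)"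
    using L_Vdeg[OF less.prems(1)] by (simp add: x_def)
  show ?case
  proof (cases "k < n")
    case True
    then show ?thesis
      using Vdeg_negative[OF x] charge_bound_nonneg sqnorm_nonneg[of c] by (simp add: x_def)
  next
    case False
    \<comment> \<open>\<open>x = L\<^sub>n c\<close> has degree \<open>k - n\<close>; bound \<open>\<parallel>L\<^sub>-\<^sub>n x\<parallel>\<close> by the induction hypothesis and
      use \<open>\<parallel>x\<parallel>\<^sup>2 = (c | L\<^sub>-\<^sub>n x)\<close>\<close>
    define k' where "k' = k - n"
    have k: "k = k' + n" using False by (simp add: k'_def)
    have x': "x \<in> Vdeg k'" using x k by simp
    define G where "G = 2 * k'\<^sup>2 + charge_bound * n\<^sup>2 * k' + 2 * n * k' + charge_bound * n ^ 3"
    have "sqnorm (L (- n) x) \<le> sqnorm (L n x) + (2 * n * k' + charge_bound * n ^ 3) * sqnorm x"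
      by (rule sqnorm_L_uminus_le[OF x'])
    also have "sqnorm (L n x) \<le> (2 * k'\<^sup>2 + charge_bound * n\<^sup>2 * k') * sqnorm x"
      using less.IH[OF _ x' less.prems(2)] k less.prems(2) by simp
    finally have Lx: "sqnorm (L (- n) x) \<le> G * sqnorm x"
      by (simp add: G_def algebra_simps)
    have "sqnorm x = Re (sp c (L (- n) x))"
      using L_adjoint[of c "- n" x] by (simp add: sqnorm_def x_def)
    then have "sqnorm x \<le> vnorm sp c * vnorm sp (L (- n) x)"
      using Re_sp_le by simp
    then have "sqnorm x \<le> G * sqnorm c"
      by (rule sqnorm_le_from_product_bound[OF _ Lx]) (simp add: G_def charge_bound_nonneg)
    moreover have "G \<le> 2 * k\<^sup>2 + charge_bound * n\<^sup>2 * k"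
      unfolding G_def k by (simp add: algebra_simps power2_eq_square power3_eq_cube)
    ultimately show ?thesis
      unfolding x_def by (meson mult_right_mono sqnorm_nonneg order_trans)
  qed
qed

definition L_const :: real where
  "L_const = 4 + 2 * charge_bound"

lemma L_const_pos: "L_const > 0"
  using charge_bound_nonneg by (simp add: L_const_def)

lemma sqnorm_L_homogeneous_le:
  assumes c: "c \<in> Vdeg (int k)"
  shows "sqnorm (L m c) \<le> L_const * ((1 + real_of_int \<bar>m\<bar>)^3 * (1 + real k)\<^sup>2) * sqnorm c"
proof -
  define n where "n = nat \<bar>m\<bar>"
  have m: "real_of_int \<bar>m\<bar> = real n" by (simp add: n_def)
  define P where "P = 2 * real k ^ 2 + charge_bound * real n ^ 2 * real k + 2 * real n * real k + charge_bound * real n ^ 3"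
  have "sqnorm (L m c) \<le> P * sqnorm c"
  proof -
    consider "m = int n" "0 < n" | "m = 0" | "m = - int n" "0 < n"
      unfolding n_def by linarith
    then show ?thesis
    proof cases
      case 1
      have "sqnorm (L m c) \<le> (2 * k\<^sup>2 + charge_bound * n\<^sup>2 * k) * sqnorm c"
        using sqnorm_L_positive_le[OF c 1(2)] 1(1) by simp
      also have "\<dots> \<le> P * sqnorm c"
        unfolding P_def using charge_bound_nonneg sqnorm_nonneg by (intro mult_right_mono) auto
      finally show ?thesis .
    next
      case 2
      then have "n = 0" by (simp add: n_def)
      moreover have "L m c = sc (of_nat k) c"
        using c 2 by (simp add: Vdeg_def)
      ultimately show ?thesis
        using sqnorm_nonneg[of c] by (simp add: P_def sqnorm_scale)
    next
      case 3
      have "sqnorm (L m c) \<le> sqnorm (L n c) + (2 * n * k + charge_bound * n ^ 3) * sqnorm c"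
        using sqnorm_L_uminus_le[OF c] 3(1) by simp
      also have "sqnorm (L n c) \<le> (2 * k\<^sup>2 + charge_bound * n\<^sup>2 * k) * sqnorm c"
        by (rule sqnorm_L_positive_le[OF c 3(2)])
      finally show ?thesis
        by (simp add: P_def algebra_simps)
    qed
  qed
  also have "P \<le> L_const * ((1 + real n)^3 * (1 + real k)\<^sup>2)"
    unfolding P_def L_const_def by (rule cubic_polynomial_le) (simp_all add: charge_bound_nonneg)
  then have "P * sqnorm c \<le> L_const * ((1 + real n)^3 * (1 + real k)\<^sup>2) * sqnorm c"
    using sqnorm_nonneg by (rule mult_right_mono)
  finally show ?thesis
    by (simp only: m)
qed

section \<open>Operators shifting the degree\<close>

abbreviation Vl :: "int \<Rightarrow> 'v set" where "Vl \<equiv> Vle sc Y \<nu>"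

lemma hcomp_Vdeg_nonzero: "x \<in> Vdeg w \<Longrightarrow> hc x k \<noteq> 0 \<Longrightarrow> int k = w"
proof -
  assume x: "x \<in> Vdeg w" and k: "hc x k \<noteq> 0"
  then have "x \<noteq> 0" by (auto simp: hcomp_zero)
  then have "0 \<le> w" using Vdeg_negative[OF x] by force
  then obtain n where w: "w = int n" by (metis nonneg_eq_int)
  with hcomp_homogeneous[of x n] x k show ?thesis by (auto split: if_splits)
qed

lemma Vdeg_Vle: "x \<in> Vdeg (int k) \<Longrightarrow> x \<in> Vl (int k)"
  using hcomp_Vdeg_nonzero by (force simp: Vle_def)

lemma zero_Vle: "0 \<in> Vl n"
  by (simp add: Vle_def hcomp_zero)

lemma scale_Vle: "c \<in> Vl n \<Longrightarrow> sc t c \<in> Vl n"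
  by (simp add: Vle_def hcomp_scale)

lemma sum_Vle:
  assumes "\<And>i. i \<in> I \<Longrightarrow> f i \<in> Vdeg (w i)" "\<And>i. i \<in> I \<Longrightarrow> w i \<le> n"
  shows "sum f I \<in> Vl n"
proof -
  have "int k \<le> n" if "hc (sum f I) k \<noteq> 0" for k
  proof -
    from that have "(\<Sum>i\<in>I. hc (f i) k) \<noteq> 0"
      by (simp add: hcomp_sum)
    then obtain i where i: "i \<in> I" "hc (f i) k \<noteq> 0"
      by (meson sum.neutral)
    then have "int k = w i"
      using hcomp_Vdeg_nonzero assms(1) by blast
    then show ?thesis
      using assms(2) i by simp
  qed
  then show ?thesis by (simp add: Vle_def)
qed

definition degree_shift :: "int \<Rightarrow> ('v \<Rightarrow> 'v) \<Rightarrow> bool" where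
  "degree_shift j T \<longleftrightarrow> module_hom sc sc T \<and> (\<forall>c w. c \<in> Vdeg w \<longrightarrow> T c \<in> Vdeg (w + j))"

lemma degree_shift_Vdeg: "degree_shift j T \<Longrightarrow> c \<in> Vdeg w \<Longrightarrow> T c \<in> Vdeg (w + j)"
  by (simp add: degree_shift_def)

lemma degree_shift_expand:
  assumes "degree_shift j T"
  shows "T b = (\<Sum>k\<in>{k. hc b k \<noteq> 0}. T (hc b k))"
proof -
  have "T b = T (\<Sum>k\<in>{k. hc b k \<noteq> 0}. hc b k)"
    using hcomp_sum_superset[OF hcomp_finite[of b]] by simp
  also have "\<dots> = (\<Sum>k\<in>{k. hc b k \<noteq> 0}. T (hc b k))"
    using assms by (intro module_hom.sum[of sc sc]) (simp add: degree_shift_def)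
  finally show ?thesis .
qed

lemma degree_shift_Vle:
  assumes T: "degree_shift j T" and b: "b \<in> Vl n"
  shows "T b \<in> Vl (n + j)"
  unfolding degree_shift_expand[OF T, of b]
proof (rule sum_Vle[where w="\<lambda>k. int k + j"])
  fix k
  show "T (hc b k) \<in> Vdeg (int k + j)"
    by (rule degree_shift_Vdeg[OF T hcomp_Vdeg])
  assume "k \<in> {k. hc b k \<noteq> 0}"
  then show "int k + j \<le> n + j"
    using b by (simp add: Vle_def)
qed

lemma sqnorm_degree_shift:
  assumes T: "degree_shift j T"
  shows "sqnorm (T b) = (\<Sum>k\<in>{k. hc b k \<noteq> 0}. sqnorm (T (hc b k)))"
  unfolding degree_shift_expand[OF T, of b]
proof (rule sqnorm_sum_Vdeg[where w="\<lambda>k. int k + j"])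
  show "finite {k. hc b k \<noteq> 0}"
    by (rule hcomp_finite)
  show "T (hc b k) \<in> Vdeg (int k + j)" for k
    by (rule degree_shift_Vdeg[OF T hcomp_Vdeg])
qed (simp add: inj_on_def)

lemma sqnorm_degree_shift_le:
  assumes T: "degree_shift j T"
    and bound: "\<And>k. hc b k \<noteq> 0 \<Longrightarrow> sqnorm (T (hc b k)) \<le> \<beta> * sqnorm (hc b k)"
  shows "sqnorm (T b) \<le> \<beta> * sqnorm b"
proof -
  have "sqnorm (T b) = (\<Sum>k\<in>{k. hc b k \<noteq> 0}. sqnorm (T (hc b k)))"
    by (rule sqnorm_degree_shift[OF T])
  also have "\<dots> \<le> (\<Sum>k\<in>{k. hc b k \<noteq> 0}. \<beta> * sqnorm (hc b k))"
    by (intro sum_mono) (simp add: bound)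
  also have "\<dots> = \<beta> * sqnorm b"
    by (simp add: sqnorm_hcomp[of b] sum_distrib_left)
  finally show ?thesis .
qed

lemma degree_shift_L: "degree_shift (- m) (L m)"
  using L_Vdeg by (simp add: degree_shift_def L_hom)

lemma vnorm_L_Vle:
  assumes b: "b \<in> Vl n"
  shows "vnorm sp (L m b) \<le> sqrt L_const * ((1 + real_of_int \<bar>m\<bar>) * sqrt (1 + real_of_int \<bar>m\<bar>))
    * (1 + real_of_int \<bar>n\<bar>) * vnorm sp b"
proof -
  define \<beta> where "\<beta> = L_const * ((1 + real_of_int \<bar>m\<bar>)^3 * (1 + real_of_int \<bar>n\<bar>)\<^sup>2)"
  have "sqnorm (L m b) \<le> \<beta> * sqnorm b"
  proof (rule sqnorm_degree_shift_le[OF degree_shift_L])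
    fix k assume k: "hc b k \<noteq> 0"
    then have "int k \<le> n"
      using b by (simp add: Vle_def)
    then have "1 + real k \<le> 1 + real_of_int \<bar>n\<bar>"
      by linarith
    then have "L_const * ((1 + real_of_int \<bar>m\<bar>)^3 * (1 + real k)\<^sup>2) \<le> \<beta>"
      unfolding \<beta>_def using L_const_pos by (intro mult_left_mono power_mono) auto
    then show "sqnorm (L m (hc b k)) \<le> \<beta> * sqnorm (hc b k)"
      using sqnorm_L_homogeneous_le[OF hcomp_Vdeg, of m b k] sqnorm_nonneg[of "hc b k"]
      by (meson mult_right_mono order_trans)
  qed
  then have "sqrt (sqnorm (L m b)) \<le> sqrt \<beta> * sqrt (sqnorm b)"
    by (simp add: real_sqrt_mult[symmetric])
  moreover have "sqrt \<beta> = sqrt L_const * ((1 + real_of_int \<bar>m\<bar>) * sqrt (1 + real_of_int \<bar>m\<bar>))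
      * (1 + real_of_int \<bar>n\<bar>)"
  proof -
    have "(1 + real_of_int \<bar>m\<bar>)^3 = ((1 + real_of_int \<bar>m\<bar>) * sqrt (1 + real_of_int \<bar>m\<bar>))\<^sup>2"
      by (simp add: power_mult_distrib power3_eq_cube power2_eq_square)
    then show ?thesis unfolding \<beta>_def by (simp add: real_sqrt_mult)
  qed
  ultimately show ?thesis
    by (simp add: vnorm_sqnorm)
qed

lemma Sup_unit_ball_le:
  assumes "\<And>b. b \<in> U \<Longrightarrow> vnorm sp (R b) \<le> Z * vnorm sp b" "Z \<ge> 0"
  shows "Sup {ereal (vnorm sp (R b)) | b. b \<in> U \<and> vnorm sp b \<le> 1} \<le> ereal Z"
proof (rule Sup_least)
  fix y assume "y \<in> {ereal (vnorm sp (R b)) | b. b \<in> U \<and> vnorm sp b \<le> 1}"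
  then obtain b where b: "y = ereal (vnorm sp (R b))" "b \<in> U" "vnorm sp b \<le> 1" by blast
  have "vnorm sp (R b) \<le> Z * vnorm sp b" using assms b by blast
  also have "\<dots> \<le> Z" using b assms(2) by (simp add: mult_left_le)
  finally show "y \<le> ereal Z" using b by simp
qed

lemma homogeneous_zero: "(\<And>t x. R (sc t x) = sc t (R x)) \<Longrightarrow> R 0 = 0"
  by (metis vs.scale_zero_left)

lemma Sup_unit_ball_nonneg:
  assumes "\<And>t x. R (sc t x) = sc t (R x)" "0 \<in> U"
  shows "0 \<le> Sup {ereal (vnorm sp (R b)) | b. b \<in> U \<and> vnorm sp b \<le> 1}"
proof -
  have "ereal 0 \<in> {ereal (vnorm sp (R b)) | b. b \<in> U \<and> vnorm sp b \<le> 1}"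
    using homogeneous_zero[OF assms(1)] assms(2) by (intro CollectI exI[of _ 0]) simp
  then show ?thesis
    unfolding zero_ereal_def by (rule Sup_upper)
qed

lemma vnorm_le_Sup_unit_ball:
  assumes Sup: "Sup {ereal (vnorm sp (R b)) | b. b \<in> U \<and> vnorm sp b \<le> 1} = ereal X"
    and R: "\<And>t x. R (sc t x) = sc t (R x)" and U: "\<And>t x. x \<in> U \<Longrightarrow> sc t x \<in> U"
    and c: "c \<in> U"
  shows "vnorm sp (R c) \<le> X * vnorm sp c"
proof (cases "c = 0")
  case True
  then show ?thesis using homogeneous_zero[OF R] by simp
next
  case False
  define t where "t = 1 / vnorm sp c"
  have t: "t > 0" using vnorm_pos[OF False] by (simp add: t_def)
  have "vnorm sp (sc (of_real t) c) = 1"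
    using vnorm_pos[OF False] by (simp add: t_def vnorm_scale norm_divide)
  then have "ereal (vnorm sp (R (sc (of_real t) c))) \<le> ereal X"
    unfolding Sup[symmetric] using U[OF c] by (intro Sup_upper) auto
  then have "t * vnorm sp (R c) \<le> X"
    using t by (simp add: R vnorm_scale)
  then show ?thesis
    using t by (simp add: t_def field_simps)
qed

lemma opnorm_le_leI:
  "(\<And>b. b \<in> Vl n \<Longrightarrow> vnorm sp (R b) \<le> Z * vnorm sp b) \<Longrightarrow> Z \<ge> 0
    \<Longrightarrow> opnorm_le sc Y \<nu> sp R n \<le> ereal Z"
  unfolding opnorm_le_def by (rule Sup_unit_ball_le)

lemma opnormI:
  "(\<And>b. vnorm sp (R b) \<le> Z * vnorm sp b) \<Longrightarrow> Z \<ge> 0 \<Longrightarrow> opnorm sp R \<le> ereal Z"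
  using Sup_unit_ball_le[of UNIV R Z] by (simp add: opnorm_def)

lemma opnorm_le_nonneg: "(\<And>t x. R (sc t x) = sc t (R x)) \<Longrightarrow> 0 \<le> opnorm_le sc Y \<nu> sp R n"
  using Sup_unit_ball_nonneg[of R "Vl n"] zero_Vle by (simp add: opnorm_le_def)

lemma opnorm_nonneg: "(\<And>t x. R (sc t x) = sc t (R x)) \<Longrightarrow> 0 \<le> opnorm sp R"
  using Sup_unit_ball_nonneg[of R UNIV] by (simp add: opnorm_def)

lemma vnorm_le_opnorm_le:
  "opnorm_le sc Y \<nu> sp R n = ereal X \<Longrightarrow> (\<And>t x. R (sc t x) = sc t (R x)) \<Longrightarrow> c \<in> Vl n
    \<Longrightarrow> vnorm sp (R c) \<le> X * vnorm sp c"
  unfolding opnorm_le_def by (rule vnorm_le_Sup_unit_ball) (auto intro: scale_Vle)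

lemma vnorm_le_opnorm:
  "opnorm sp R = ereal X \<Longrightarrow> (\<And>t x. R (sc t x) = sc t (R x)) \<Longrightarrow> vnorm sp (R c) \<le> X * vnorm sp c"
  using vnorm_le_Sup_unit_ball[of R UNIV X c] by (simp add: opnorm_def)

lemma sqnorm_reweighted_le:
  assumes "\<And>k. hc c k \<noteq> 0 \<Longrightarrow> 0 \<le> e k \<and> e k \<le> B"
  shows "sqnorm (\<Sum>k\<in>{k. hc c k \<noteq> 0}. sc (of_real (e k)) (hc c k)) \<le> B\<^sup>2 * sqnorm c"
proof -
  have "sqnorm (\<Sum>k\<in>{k. hc c k \<noteq> 0}. sc (of_real (e k)) (hc c k))
      = (\<Sum>k\<in>{k. hc c k \<noteq> 0}. (e k)\<^sup>2 * sqnorm (hc c k))"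
    by (subst sqnorm_sum_Vdeg[where w=int])
      (auto simp: hcomp_finite inj_on_def sqnorm_scale intro: vs.subspace_scale[OF subspace_Vdeg hcomp_Vdeg])
  also have "\<dots> \<le> (\<Sum>k\<in>{k. hc c k \<noteq> 0}. B\<^sup>2 * sqnorm (hc c k))"
    using assms by (intro sum_mono mult_right_mono power_mono) (auto simp: sqnorm_nonneg)
  also have "\<dots> = B\<^sup>2 * sqnorm c"
    by (simp add: sqnorm_hcomp[of c] sum_distrib_left)
  finally show ?thesis .
qed

abbreviation L0p :: "real \<Rightarrow> 'v \<Rightarrow> 'v" where "L0p \<equiv> L0pow sc Y \<nu>"

lemma L0pow_superset:
  assumes "finite T" "{k. hc v k \<noteq> 0} \<subseteq> T"
  shows "L0p s v = (\<Sum>k\<in>T. sc (of_real ((real k + 1) powr (- s))) (hc v k))"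
  unfolding L0pow_def using assms by (intro sum.mono_neutral_left) auto

lemma L0pow_scale: "L0p s (sc t x) = sc t (L0p s x)"
proof -
  have "L0p s (sc t x) = (\<Sum>k\<in>{k. hc x k \<noteq> 0}. sc (of_real ((real k + 1) powr (- s))) (hc (sc t x) k))"
    by (rule L0pow_superset[OF hcomp_finite]) (auto simp: hcomp_scale)
  also have "\<dots> = sc t (L0p s x)"
    by (simp add: L0pow_def hcomp_scale vs.scale_sum_right mult.commute)
  finally show ?thesis .
qed

lemma L0pow_preimage:
  assumes s: "0 \<le> s" and c: "c \<in> Vl j"
  shows "\<exists>x. L0p s x = c \<and> vnorm sp x \<le> (1 + real_of_int \<bar>j\<bar>) powr s * vnorm sp c"
proof -
  define S where "S = {k. hc c k \<noteq> 0}"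
  have S: "finite S" unfolding S_def by (rule hcomp_finite)
  define e where "e k = (real k + 1) powr s" for k
  define x where "x = (\<Sum>k\<in>S. sc (of_real (e k)) (hc c k))"
  have x_Vdeg: "sc (of_real (e k)) (hc c k) \<in> Vdeg (int k)" for k
    by (rule vs.subspace_scale[OF subspace_Vdeg hcomp_Vdeg])
  have hx: "hc x = (\<lambda>k. if k \<in> S then sc (of_real (e k)) (hc c k) else 0)"
    unfolding x_def using S x_Vdeg by (rule hcomp_unique)
  have "L0p s x = (\<Sum>k\<in>S. sc (of_real ((real k + 1) powr (- s))) (hc x k))"
    by (rule L0pow_superset[OF S]) (auto simp: hx)
  also have "\<dots> = (\<Sum>k\<in>S. hc c k)"
  proof (rule sum.cong[OF refl])
    fix k assume "k \<in> S"
    have "(of_real ((real k + 1) powr (- s)) :: complex) * of_real (e k) = 1"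
      unfolding e_def of_real_mult[symmetric] powr_add[symmetric] by simp
    then show "sc (of_real ((real k + 1) powr (- s))) (hc x k) = hc c k"
      using \<open>k \<in> S\<close> by (simp add: hx)
  qed
  also have "\<dots> = c"
    unfolding S_def by (rule hcomp_sum_superset[OF hcomp_finite]) simp
  finally have "L0p s x = c" .
  moreover have "sqnorm x \<le> ((1 + real_of_int \<bar>j\<bar>) powr s)\<^sup>2 * sqnorm c"
    unfolding x_def S_def
  proof (rule sqnorm_reweighted_le)
    fix k assume "hc c k \<noteq> 0"
    then have "int k \<le> j"
      using c by (simp add: Vle_def)
    then have "real k + 1 \<le> 1 + real_of_int \<bar>j\<bar>"
      by linarith
    then show "0 \<le> e k \<and> e k \<le> (1 + real_of_int \<bar>j\<bar>) powr s"
      unfolding e_def using s by (auto intro: powr_mono2)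
  qed
  then have "vnorm sp x \<le> (1 + real_of_int \<bar>j\<bar>) powr s * vnorm sp c"
    by (simp add: vnorm_sqnorm real_sqrt_mult real_sqrt_le_mono[THEN order_trans])
  ultimately show ?thesis by blast
qed

section \<open>Modes of a primary vector\<close>

lemma primary_Vdeg: "primary sc Y \<nu> a d \<Longrightarrow> a \<in> Vdeg (int d)"
  by (simp add: primary_def eigsp_Vdeg)

lemma commutator_conformal_primary:
  assumes a: "primary sc Y \<nu> a d"
  shows "Y \<nu> p (Y a q c) - Y a q (Y \<nu> p c) = sc (of_int (p * int d - p - q)) (Y a (p + q - 1) c)"
proof -
  \<comment> \<open>Borcherds identity with \<open>r = 0\<close>: only the terms \<open>Y \<nu> 0 a = L\<^sub>-\<^sub>1 a\<close> and
    \<open>Y \<nu> 1 a = L\<^sub>0 a = d a\<close> survive on the left, only \<open>i = 0\<close> on the right\<close>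
  define f where "f = (\<lambda>i. sc (of_int p gchoose i) (Y (Y \<nu> (0 + int i) a) (p + q - int i) c))"
  define g where "g = (\<lambda>i. sc ((-1)^i * (of_int 0 gchoose i))
      (Y \<nu> (p + 0 - int i) (Y a (q + int i) c)
       - sc (sgn_pow 0) (Y a (q + 0 - int i) (Y \<nu> (p + int i) c))))"
  have "\<forall>\<^sub>F M in sequentially. sum f {..<M} = sum g {..<M}"
    unfolding f_def g_def by (rule borcherds)
  then obtain N where N: "\<And>M. M \<ge> N \<Longrightarrow> sum f {..<M} = sum g {..<M}"
    unfolding eventually_sequentially by blast
  define M where "M = N + 2"
  have M: "sum f {..<M} = sum g {..<M}" "M \<ge> 2"
    using N[of M] by (simp_all add: M_def)
  have "f i = 0" if "i \<ge> 2" for i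
  proof -
    have "Y \<nu> (int i) a = L (int i - 1) a" by (simp add: Lop_def)
    also have "\<dots> = 0" using a that by (simp add: primary_def)
    finally show ?thesis by (simp add: f_def module_hom.zero[OF mode_hom_left])
  qed
  then have "sum f {..<M} = f 0 + f 1"
    using M(2) by (subst sum.mono_neutral_right[of "{..<M}" "{..<2}"]) (auto simp: numeral_2_eq_2)
  also have "f 0 = sc (- of_int (p + q)) (Y a (p + q - 1) c)"
    using L_minus_one_derivative[of a "p + q" c] by (simp add: f_def Lop_def)
  also have "f 1 = sc (of_int p * of_nat d) (Y a (p + q - 1) c)"
    using primary_Vdeg[OF a] by (simp add: f_def Vdeg_def Lop_def module_hom.scale[OF mode_hom_left])
  also have "sc (- of_int (p + q)) (Y a (p + q - 1) c) + sc (of_int p * of_nat d) (Y a (p + q - 1) c)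
      = sc (- of_int (p + q) + of_int p * of_nat d) (Y a (p + q - 1) c)"
    by (rule vs.scale_left_distrib[symmetric])
  also have "- of_int (p + q) + of_int p * of_nat d = (of_int (p * int d - p - q) :: complex)"
    by simp
  finally have "sum f {..<M} = sc (of_int (p * int d - p - q)) (Y a (p + q - 1) c)" .
  moreover have "sum g {..<M} = g 0"
    using M(2) by (subst sum.mono_neutral_right[of "{..<M}" "{..<1}"]) (auto simp: g_def gbinomial_0_left)
  ultimately show ?thesis
    using M(1) by (simp add: g_def sgn_pow_def)
qed

lemma pmode_primary: "primary sc Y \<nu> a d \<Longrightarrow> pmode sc Y \<nu> a n = Y a (n + int d - 1)"
  by (rule pmode_homogeneous[OF primary_Vdeg])

lemma L_pmode_commutator:
  assumes "primary sc Y \<nu> a d"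
  shows "L m (pmode sc Y \<nu> a n c) - pmode sc Y \<nu> a n (L m c)
    = sc (of_int ((int d - 1) * m - n)) (pmode sc Y \<nu> a (m + n) c)"
  using commutator_conformal_primary[OF assms, of "m + 1" "n + int d - 1" c]
  by (simp add: pmode_primary[OF assms] Lop_def algebra_simps)

lemma degree_shift_pmode:
  assumes "primary sc Y \<nu> a d"
  shows "degree_shift (- n) (pmode sc Y \<nu> a n)"
  unfolding degree_shift_def
proof (intro conjI allI impI)
  show hom: "module_hom sc sc (pmode sc Y \<nu> a n)"
    unfolding pmode_primary[OF assms] by (rule mode_hom)
  fix c w assume c: "c \<in> Vdeg w"
  have "L 0 (pmode sc Y \<nu> a n c) = pmode sc Y \<nu> a n (L 0 c) + sc (of_int (- n)) (pmode sc Y \<nu> a n c)"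
    using L_pmode_commutator[OF assms, of 0 n c] by (simp add: diff_eq_eq add.commute)
  also have "\<dots> = sc (of_int (w + - n)) (pmode sc Y \<nu> a n c)"
    using c by (simp add: Vdeg_def module_hom.scale[OF hom] vs.scale_left_diff_distrib)
  finally show "pmode sc Y \<nu> a n c \<in> Vdeg (w + - n)"
    by (simp add: Vdeg_def)
qed

lemma pmode_by_commutator:
  assumes "primary sc Y \<nu> a d" "d \<noteq> 1" "m \<noteq> 0"
  shows "pmode sc Y \<nu> a m c
    = sc (1 / of_int ((int d - 1) * m)) (L m (pmode sc Y \<nu> a 0 c) - pmode sc Y \<nu> a 0 (L m c))"
proof -
  have "(of_int ((int d - 1) * m) :: complex) \<noteq> 0"
    using assms by simp
  then show ?thesis
    using L_pmode_commutator[OF assms(1), of m 0 c] by simp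
qed

end

section \<open>Energy bounds\<close>

locale unitary_voa_primary = unitary_voa sc Y \<Omega> \<nu> sp star
  for sc :: "complex \<Rightarrow> 'v::ab_group_add \<Rightarrow> 'v" and Y \<Omega> \<nu> sp star +
  fixes a :: 'v and d :: nat
  assumes primary: "primary sc Y \<nu> a d" and weight_ne_1: "d \<noteq> 1"
begin

abbreviation mode :: "int \<Rightarrow> 'v \<Rightarrow> 'v" where "mode n \<equiv> pmode sc Y \<nu> a n"

lemma mode_scale: "mode n (sc t x) = sc t (mode n x)"
  using degree_shift_pmode[OF primary, of n] by (simp add: degree_shift_def module_hom.scale)

lemma mode_Vle: "b \<in> Vl n \<Longrightarrow> mode m b \<in> Vl (n - m)"
  using degree_shift_Vle[OF degree_shift_pmode[OF primary]] by simp

definition mode_const :: real where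
  "mode_const = 1 + 2 * sqrt L_const"

lemma mode_const_ge_1: "mode_const \<ge> 1"
  using L_const_pos by (simp add: mode_const_def)

lemma mode_factor_ge_1: "1 \<le> mode_const * sqrt (1 + real_of_int \<bar>m\<bar>) * (1 + real_of_int \<bar>n\<bar>)"
proof -
  have "1 * 1 * 1 \<le> mode_const * sqrt (1 + real_of_int \<bar>m\<bar>) * (1 + real_of_int \<bar>n\<bar>)"
    using mode_const_ge_1 by (intro mult_mono) auto
  then show ?thesis by simp
qed

lemma vnorm_mode_by_commutator:
  assumes m: "m \<noteq> 0"
  shows "real_of_int \<bar>m\<bar> * vnorm sp (mode m b) \<le> vnorm sp (L m (mode 0 b)) + vnorm sp (mode 0 (L m b))"
proof -
  define r where "r = real_of_int \<bar>(int d - 1) * m\<bar>"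
  \<comment> \<open>\<open>\<bar>d - 1\<bar> \<ge> 1\<close> is where \<open>d \<noteq> 1\<close> enters\<close>
  have "1 * \<bar>m\<bar> \<le> \<bar>int d - 1\<bar> * \<bar>m\<bar>"
    using weight_ne_1 by (intro mult_right_mono) auto
  then have "\<bar>m\<bar> \<le> \<bar>(int d - 1) * m\<bar>"
    by (simp add: abs_mult)
  then have r: "real_of_int \<bar>m\<bar> \<le> r"
    unfolding r_def by (simp only: of_int_le_iff)
  have "cmod (1 / (of_int ((int d - 1) * m) :: complex)) = 1 / r"
    unfolding r_def by (simp only: norm_divide norm_one norm_of_int of_int_abs)
  then have "vnorm sp (mode m b) = (1 / r) * vnorm sp (L m (mode 0 b) - mode 0 (L m b))"
    unfolding pmode_by_commutator[OF primary weight_ne_1 m] vnorm_scale by simp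
  then have "r * vnorm sp (mode m b) = vnorm sp (L m (mode 0 b) - mode 0 (L m b))"
    using r m by simp
  also have "\<dots> \<le> vnorm sp (L m (mode 0 b)) + vnorm sp (mode 0 (L m b))"
    by (rule vnorm_diff_le)
  finally show ?thesis
    using r vnorm_nonneg[of "mode m b"] by (meson mult_right_mono order_trans)
qed

lemma vnorm_mode_Vle:
  assumes b: "b \<in> Vl n"
    and X: "X \<ge> 0" "\<And>c. c \<in> Vl n \<Longrightarrow> vnorm sp (mode 0 c) \<le> X * vnorm sp c"
    and Z: "Z \<ge> 0" "\<And>c. c \<in> Vl (n - m) \<Longrightarrow> vnorm sp (mode 0 c) \<le> Z * vnorm sp c"
  shows "vnorm sp (mode m b)
    \<le> mode_const * sqrt (1 + real_of_int \<bar>m\<bar>) * (1 + real_of_int \<bar>n\<bar>) * (X + Z) * vnorm sp b"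
proof -
  define \<mu> where "\<mu> = 1 + real_of_int \<bar>m\<bar>"
  define \<eta> where "\<eta> = 1 + real_of_int \<bar>n\<bar>"
  have \<mu>: "\<mu> \<ge> 1" and \<eta>: "\<eta> \<ge> 1" by (simp_all add: \<mu>_def \<eta>_def)
  have XZ: "0 \<le> (X + Z) * vnorm sp b" using X Z vnorm_nonneg by simp
  show ?thesis
  proof (cases "m = 0")
    case True
    have "vnorm sp (mode m b) \<le> X * vnorm sp b"
      using X(2)[OF b] True by simp
    also have "\<dots> \<le> (X + Z) * vnorm sp b"
      using Z(1) by (intro mult_right_mono) (simp_all add: vnorm_nonneg)
    also have "\<dots> \<le> (mode_const * sqrt \<mu> * \<eta>) * ((X + Z) * vnorm sp b)"
      using mult_right_mono[OF mode_factor_ge_1 XZ] by (simp add: \<mu>_def \<eta>_def)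
    finally show ?thesis by (simp add: \<mu>_def \<eta>_def mult.assoc)
  next
    case False
    define S where "S = sqrt L_const * (\<mu> * sqrt \<mu>) * \<eta>"
    have S: "S \<ge> 0" using L_const_pos \<mu> \<eta> by (simp add: S_def)
    have "vnorm sp (L m (mode 0 b)) \<le> S * vnorm sp (mode 0 b)"
      using vnorm_L_Vle[OF mode_Vle[OF b, of 0]] by (simp add: S_def \<mu>_def \<eta>_def)
    also have "\<dots> \<le> S * (X * vnorm sp b)"
      using X(2)[OF b] S by (rule mult_left_mono)
    finally have t1: "vnorm sp (L m (mode 0 b)) \<le> S * (X * vnorm sp b)" .
    have "vnorm sp (mode 0 (L m b)) \<le> Z * vnorm sp (L m b)"
      using Z(2) degree_shift_Vle[OF degree_shift_L b] by simp
    also have "\<dots> \<le> Z * (S * vnorm sp b)"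
      using vnorm_L_Vle[OF b, of m] Z(1) by (intro mult_left_mono) (simp_all add: S_def \<mu>_def \<eta>_def)
    finally have t2: "vnorm sp (mode 0 (L m b)) \<le> Z * (S * vnorm sp b)" .
    have "\<mu> \<le> 2 * real_of_int \<bar>m\<bar>"
      using False by (simp add: \<mu>_def)
    then have "\<mu> * vnorm sp (mode m b) \<le> 2 * (real_of_int \<bar>m\<bar> * vnorm sp (mode m b))"
      using vnorm_nonneg mult_right_mono by (metis mult.assoc)
    also have "\<dots> \<le> 2 * (S * (X + Z) * vnorm sp b)"
      using vnorm_mode_by_commutator[OF False, of b] t1 t2 by (simp add: algebra_simps)
    also have "\<dots> = \<mu> * (2 * sqrt L_const * sqrt \<mu> * \<eta> * ((X + Z) * vnorm sp b))"
      by (simp add: S_def)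
    finally have "vnorm sp (mode m b) \<le> 2 * sqrt L_const * sqrt \<mu> * \<eta> * ((X + Z) * vnorm sp b)"
      using \<mu> by simp
    also have "\<dots> \<le> mode_const * sqrt \<mu> * \<eta> * ((X + Z) * vnorm sp b)"
      using \<mu> \<eta> XZ by (intro mult_right_mono) (simp_all add: mode_const_def)
    finally show ?thesis by (simp add: \<mu>_def \<eta>_def mult.assoc)
  qed
qed

lemma opnorm_le_mode:
  "opnorm_le sc Y \<nu> sp (mode m) n
     \<le> ereal (mode_const * sqrt (1 + real_of_int \<bar>m\<bar>) * (1 + real_of_int \<bar>n\<bar>))
        * (opnorm_le sc Y \<nu> sp (mode 0) n + opnorm_le sc Y \<nu> sp (mode 0) (n - m))"
proof -
  define P Q where "P = opnorm_le sc Y \<nu> sp (mode 0) n" and "Q = opnorm_le sc Y \<nu> sp (mode 0) (n - m)"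
  define C where "C = mode_const * sqrt (1 + real_of_int \<bar>m\<bar>) * (1 + real_of_int \<bar>n\<bar>)"
  have C: "C > 0" using mode_factor_ge_1[of m n] by (simp add: C_def)
  have P: "0 \<le> P" and Q: "0 \<le> Q"
    unfolding P_def Q_def using mode_scale by (auto intro!: opnorm_le_nonneg)
  show ?thesis unfolding P_def[symmetric] Q_def[symmetric] C_def[symmetric]
  proof (cases "P = \<infinity> \<or> Q = \<infinity>")
    case True
    then have e: "ereal C * (P + Q) = \<infinity>" using P Q C by auto
    show "opnorm_le sc Y \<nu> sp (mode m) n \<le> ereal C * (P + Q)" unfolding e by simp
  next
    case False
    then obtain X Z where X: "P = ereal X" and Z: "Q = ereal Z"
      using P Q by (cases P; cases Q) auto
    have "opnorm_le sc Y \<nu> sp (mode m) n \<le> ereal (C * (X + Z))"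
    proof (rule opnorm_le_leI)
      fix b assume "b \<in> Vl n"
      then show "vnorm sp (mode m b) \<le> C * (X + Z) * vnorm sp b"
        using vnorm_mode_Vle[of b n X Z m] P Q X Z
          vnorm_le_opnorm_le[OF X[unfolded P_def] mode_scale] vnorm_le_opnorm_le[OF Z[unfolded Q_def] mode_scale]
        by (simp add: C_def)
    qed (use C P Q X Z in simp)
    then show "opnorm_le sc Y \<nu> sp (mode m) n \<le> ereal C * (P + Q)"
      using X Z by simp
  qed
qed

lemma vnorm_mode0_Vle:
  assumes N: "\<And>x. vnorm sp (mode 0 (L0p s x)) \<le> N * vnorm sp x" "N \<ge> 0" and s: "s \<ge> 0"
    and c: "c \<in> Vl j"
  shows "vnorm sp (mode 0 c) \<le> N * (1 + real_of_int \<bar>j\<bar>) powr s * vnorm sp c"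
proof -
  obtain x where x: "L0p s x = c" "vnorm sp x \<le> (1 + real_of_int \<bar>j\<bar>) powr s * vnorm sp c"
    using L0pow_preimage[OF s c] by blast
  have "vnorm sp (mode 0 c) \<le> N * vnorm sp x"
    using N(1)[of x] x(1) by simp
  also have "\<dots> \<le> N * ((1 + real_of_int \<bar>j\<bar>) powr s * vnorm sp c)"
    using x(2) N(2) by (rule mult_left_mono)
  finally show ?thesis by (simp add: mult.assoc)
qed

definition energy_const :: "real \<Rightarrow> real \<Rightarrow> int \<Rightarrow> real" where
  "energy_const N s m = 2 * mode_const * N * (1 + real_of_int \<bar>m\<bar>) powr (s + 1/2)"

lemma energy_const_nonneg: "N \<ge> 0 \<Longrightarrow> energy_const N s m \<ge> 0"
  using mode_const_ge_1 by (simp add: energy_const_def)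

lemma vnorm_mode_homogeneous:
  assumes N: "\<And>x. vnorm sp (mode 0 (L0p s x)) \<le> N * vnorm sp x" "N \<ge> 0" and s: "s \<ge> 0"
    and c: "c \<in> Vdeg (int k)"
  shows "vnorm sp (mode m c) \<le> energy_const N s m * (1 + real k) powr (s + 1) * vnorm sp c"
proof -
  define \<mu> q where "\<mu> = 1 + real_of_int \<bar>m\<bar>" and "q = 1 + real k"
  have \<mu>: "\<mu> \<ge> 1" and q: "q \<ge> 1" by (auto simp: \<mu>_def q_def)
  define X Z where "X = N * q powr s" and "Z = N * q powr s * \<mu> powr s"
  have X: "vnorm sp (mode 0 c') \<le> X * vnorm sp c'" if "c' \<in> Vl (int k)" for c'
    using vnorm_mode0_Vle[OF N s that] by (simp add: X_def q_def)
  have Z: "vnorm sp (mode 0 c') \<le> Z * vnorm sp c'" if "c' \<in> Vl (int k - m)" for c'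
  proof -
    have "real_of_int \<bar>int k - m\<bar> \<le> real k + real_of_int \<bar>m\<bar>" "0 \<le> real k * real_of_int \<bar>m\<bar>"
      by linarith simp
    then have "1 + real_of_int \<bar>int k - m\<bar> \<le> 1 + real k + real_of_int \<bar>m\<bar> + real k * real_of_int \<bar>m\<bar>"
      by linarith
    also have "\<dots> = q * \<mu>"
      by (simp add: q_def \<mu>_def algebra_simps)
    finally have "1 + real_of_int \<bar>int k - m\<bar> \<le> q * \<mu>" .
    then have "(1 + real_of_int \<bar>int k - m\<bar>) powr s \<le> q powr s * \<mu> powr s"
      using s \<mu> q by (simp add: powr_mult[symmetric] powr_mono2)
    then have "N * (1 + real_of_int \<bar>int k - m\<bar>) powr s * vnorm sp c' \<le> Z * vnorm sp c'"
      unfolding Z_def using N(2) vnorm_nonneg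
      by (intro mult_right_mono) (simp_all add: mult.assoc mult_left_mono)
    then show ?thesis
      using vnorm_mode0_Vle[OF N s that] by linarith
  qed
  have "vnorm sp (mode m c) \<le> mode_const * sqrt \<mu> * q * (X + Z) * vnorm sp c"
    using vnorm_mode_Vle[OF Vdeg_Vle[OF c] _ X _ Z] N(2) by (simp add: \<mu>_def q_def X_def Z_def)
  also have "\<dots> = mode_const * N * (sqrt \<mu> * (1 + \<mu> powr s)) * (q * q powr s) * vnorm sp c"
    by (simp add: X_def Z_def algebra_simps)
  also have "\<dots> \<le> mode_const * N * (sqrt \<mu> * (2 * \<mu> powr s)) * (q * q powr s) * vnorm sp c"
    using \<mu> s mode_const_ge_1 N(2) q vnorm_nonneg ge_one_powr_ge_zero[OF \<mu> s]
    by (intro mult_right_mono mult_left_mono) auto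
  also have "\<dots> = 2 * mode_const * N * (sqrt \<mu> * \<mu> powr s) * (q * q powr s) * vnorm sp c"
    by simp
  also have "sqrt \<mu> * \<mu> powr s = \<mu> powr (s + 1/2)"
    using \<mu> by (simp add: powr_add powr_half_sqrt[symmetric])
  also have "q * q powr s = q powr (s + 1)"
    using q by (simp add: powr_add)
  finally show ?thesis
    by (simp add: energy_const_def \<mu>_def q_def)
qed

lemma vnorm_mode_L0pow:
  assumes N: "\<And>x. vnorm sp (mode 0 (L0p s x)) \<le> N * vnorm sp x" "N \<ge> 0" and s: "s \<ge> 0"
  shows "vnorm sp (mode m (L0p (s + 1) x)) \<le> energy_const N s m * vnorm sp x"
proof -
  define G where "G = energy_const N s m"
  define e where "e k = (real k + 1) powr (- (s + 1))" for k
  have G: "G \<ge> 0" using energy_const_nonneg[OF N(2)] by (simp add: G_def)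
  have "mode m (L0p (s + 1) x) = mode m (\<Sum>k\<in>{k. hc x k \<noteq> 0}. sc (of_real (e k)) (hc x k))"
    by (simp add: L0pow_def e_def)
  also have "\<dots> = (\<Sum>k\<in>{k. hc x k \<noteq> 0}. sc (of_real (e k)) (mode m (hc x k)))"
    using degree_shift_pmode[OF primary, of m]
    by (simp add: degree_shift_def module_hom.sum[of sc sc] mode_scale)
  finally have sum: "mode m (L0p (s + 1) x) = (\<Sum>k\<in>{k. hc x k \<noteq> 0}. sc (of_real (e k)) (mode m (hc x k)))" .
  have "sqnorm (mode m (L0p (s + 1) x)) = (\<Sum>k\<in>{k. hc x k \<noteq> 0}. sqnorm (sc (of_real (e k)) (mode m (hc x k))))"
    unfolding sum
  proof (rule sqnorm_sum_Vdeg[where w="\<lambda>k. int k + - m"])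
    show "sc (of_real (e k)) (mode m (hc x k)) \<in> Vdeg (int k + - m)" for k
      by (rule vs.subspace_scale[OF subspace_Vdeg
            degree_shift_Vdeg[OF degree_shift_pmode[OF primary] hcomp_Vdeg]])
  qed (simp_all add: hcomp_finite inj_on_def)
  also have "\<dots> \<le> (\<Sum>k\<in>{k. hc x k \<noteq> 0}. G\<^sup>2 * sqnorm (hc x k))"
  proof (rule sum_mono)
    fix k
    \<comment> \<open>the weight \<open>(k + 1)\<^bsup>-s-1\<^esup>\<close> of \<open>L0p (s + 1)\<close> absorbs the growth in \<open>k\<close>\<close>
    have e: "e k * (1 + real k) powr (s + 1) = 1"
      unfolding e_def by (simp add: powr_add[symmetric] add.commute)
    have "e k * vnorm sp (mode m (hc x k)) \<le> e k * (G * (1 + real k) powr (s + 1) * vnorm sp (hc x k))"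
      using vnorm_mode_homogeneous[OF N s hcomp_Vdeg] by (simp add: G_def e_def mult_left_mono)
    also have "\<dots> = G * vnorm sp (hc x k)"
      using e by (simp add: algebra_simps)
    finally have "(e k * vnorm sp (mode m (hc x k)))\<^sup>2 \<le> (G * vnorm sp (hc x k))\<^sup>2"
      by (intro power_mono) (simp_all add: e_def vnorm_nonneg)
    then show "sqnorm (sc (of_real (e k)) (mode m (hc x k))) \<le> G\<^sup>2 * sqnorm (hc x k)"
      by (simp add: sqnorm_scale e_def power_mult_distrib vnorm_power2)
  qed
  also have "\<dots> = G\<^sup>2 * sqnorm x"
    by (simp add: sqnorm_hcomp[of x] sum_distrib_left)
  finally show ?thesis
    using G by (simp add: vnorm_sqnorm real_sqrt_mult G_def real_sqrt_le_mono[THEN order_trans])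
qed

lemma vnorm_mode_Vle_energy:
  assumes N: "\<And>x. vnorm sp (mode 0 (L0p s x)) \<le> N * vnorm sp x" "N \<ge> 0" and s: "s \<ge> 0"
    and b: "b \<in> Vl n"
  shows "vnorm sp (mode m b) \<le> energy_const N s m * (1 + real_of_int \<bar>n\<bar>) powr (s + 1) * vnorm sp b"
proof -
  obtain x where x: "L0p (s + 1) x = b" "vnorm sp x \<le> (1 + real_of_int \<bar>n\<bar>) powr (s + 1) * vnorm sp b"
    using L0pow_preimage[of "s + 1" b n] s b by auto
  have "vnorm sp (mode m b) \<le> energy_const N s m * vnorm sp x"
    using vnorm_mode_L0pow[OF N s, of m x] x(1) by simp
  also have "\<dots> \<le> energy_const N s m * ((1 + real_of_int \<bar>n\<bar>) powr (s + 1) * vnorm sp b)"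
    using x(2) energy_const_nonneg[OF N(2)] by (rule mult_left_mono)
  finally show ?thesis by (simp add: mult.assoc)
qed

lemma mode_energy_bound:
  assumes s: "s \<ge> 0" and fin: "opnorm sp (\<lambda>b. mode 0 (L0p s b)) < \<infinity>"
  shows "energy_bounds sc Y \<nu> sp (s + 1) a \<and>
    (\<forall>m::int. opnorm sp (\<lambda>b. mode m (L0p (s + 1) b))
       \<le> ereal (2 * mode_const * (1 + real_of_int \<bar>m\<bar>) powr (s + 1/2)) * opnorm sp (\<lambda>b. mode 0 (L0p s b)))"
proof -
  have h: "mode 0 (L0p s (sc t x)) = sc t (mode 0 (L0p s x))" for t x
    by (simp add: L0pow_scale mode_scale)
  obtain N where N: "opnorm sp (\<lambda>b. mode 0 (L0p s b)) = ereal N"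
    using fin opnorm_nonneg[OF h] by (cases "opnorm sp (\<lambda>b. mode 0 (L0p s b))") auto
  have N0: "N \<ge> 0" using opnorm_nonneg[OF h] N by simp
  have Nb: "vnorm sp (mode 0 (L0p s x)) \<le> N * vnorm sp x" for x
    using vnorm_le_opnorm[OF N h] .
  have "opnorm_le sc Y \<nu> sp (mode m) n \<le> ereal (energy_const N s m * (1 + real_of_int \<bar>n\<bar>) powr (s + 1))"
    for m n
    using vnorm_mode_Vle_energy[OF Nb N0 s] energy_const_nonneg[OF N0] by (intro opnorm_le_leI) auto
  then have "energy_bounds sc Y \<nu> sp (s + 1) a"
    unfolding energy_bounds_def energy_const_def using mode_const_ge_1 N0 s
    by (intro exI[of _ "2 * mode_const * N"] exI[of _ "s + 1/2"]) (simp add: mult.assoc)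
  moreover have "opnorm sp (\<lambda>b. mode m (L0p (s + 1) b)) \<le> ereal (energy_const N s m)" for m
    using vnorm_mode_L0pow[OF Nb N0 s] energy_const_nonneg[OF N0] by (rule opnormI)
  ultimately show ?thesis
    unfolding N by (simp add: energy_const_def algebra_simps)
qed

end

theorem mainTheorem3:
  fixes sc :: "complex \<Rightarrow> 'v::ab_group_add \<Rightarrow> 'v"
    and Y :: "'v \<Rightarrow> int \<Rightarrow> 'v \<Rightarrow> 'v"
    and \<Omega> \<nu> a :: 'v and sp :: "'v \<Rightarrow> 'v \<Rightarrow> complex" and star :: "'v \<Rightarrow> 'v"
    and d :: nat
  assumes "simple_unitary_VOA sc Y \<Omega> \<nu> sp star"
    and "primary sc Y \<nu> a d"
    and "d \<noteq> 1"
  shows "\<exists>A::real. A \<ge> 0 \<and>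
    (\<forall>m n::int.
       opnorm_le sc Y \<nu> sp (pmode sc Y \<nu> a m) n
         \<le> ereal (A * sqrt (1 + real_of_int \<bar>m\<bar>) * (1 + real_of_int \<bar>n\<bar>))
            * (opnorm_le sc Y \<nu> sp (pmode sc Y \<nu> a 0) n
               + opnorm_le sc Y \<nu> sp (pmode sc Y \<nu> a 0) (n - m))) \<and>
    (\<forall>s::real. s \<ge> 0 \<and> opnorm sp (\<lambda>b. pmode sc Y \<nu> a 0 (L0pow sc Y \<nu> s b)) < \<infinity> \<longrightarrow>
       energy_bounds sc Y \<nu> sp (s + 1) a \<and>
       (\<forall>m::int.
          opnorm sp (\<lambda>b. pmode sc Y \<nu> a m (L0pow sc Y \<nu> (s + 1) b))
            \<le> ereal (2 * A * (1 + real_of_int \<bar>m\<bar>) powr (s + 1/2))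
               * opnorm sp (\<lambda>b. pmode sc Y \<nu> a 0 (L0pow sc Y \<nu> s b))))"
proof -
  interpret unitary_voa_primary sc Y \<Omega> \<nu> sp star a d
    using assms by unfold_locales
  show ?thesis
    using mode_const_ge_1 opnorm_le_mode mode_energy_bound by (intro exI[of _ mode_const]) auto
qed

end
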